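(* Let $A$ be an $\mathcal{E}$-algebra. For any $i \geq 0$ the map $\zeta_i$ in $\mathrm{Hom}(A \otimes A, A)$ defined by \begin{equation*} \zeta_i(\alpha \otimes \beta) = (H_1 + H_{2})(\tilde{x}_i)(\alpha \otimes \alpha \otimes \beta \otimes \beta) \end{equation*} is a Cartan $i$-coboundary, i.e. \begin{equation*} (\partial \zeta_i)(\alpha \otimes \beta) = (\alpha \cup_0 \beta) \cup_i (\alpha \cup_0 \beta) + \sum_{i=j+k} (\alpha \cup_j \alpha) \cup_0 (\beta \cup_k \beta). \end{equation*}
   Context: All constructions are over $\mathbb F_2$. $\mathcal E$ denotes the Barratt-Eccles operad: $\mathcal E(r) = N_*(E(r))$, the normalized chains of the simplicial set $E(r)$ whose $n$-simplices are tuples $(\sigma_0,\dots,\sigma_n)$ of permutations in $\Sigma_r$ (faces delete, degeneracies repeat an entry), with $\Sigma_r$ acting by left multiplication on each entry, and operadic composition $\circ_{\mathcal E} = N_*(\circ_E)\circ EZ^r$, where $\circ_E$ applies composition of permutations $\circ_\Sigma$ coordinatewise and $EZ$ is the Eilenberg-Zilber map. An $\mathcal E$-algebra $A$ is an operad morphism $\mathcal E \to \mathrm{End}(A)$; elements of $\mathcal E$ are identified with their images, and $\partial$ on $\mathrm{Hom}$ complexes is $\partial f = \partial\circ f + f\circ\partial$. Let $\tilde{x}_i = (e, (12), e, \dots, (12)^i) \in \mathcal E(2)_i$ and $\alpha \cup_i \beta := \tilde{x}_i(\alpha \otimes \beta)$ (the cup-$i$ product). Let $f, g : \Sigma_2 \to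 \Sigma_4$ be the homomorphisms with $f(12) = (13)(24)$ and $g(12) = (12)(34)$. Define degree-$1$ maps $H_1, H_2 : \mathcal E(2) \to \mathcal E(4)$ on basis elements by $H_1(\sigma_0,\dots,\sigma_n) = \sum_{i=0}^n \big((23)f\sigma_0, \dots, (23)f\sigma_i, g\sigma_i, \dots, g\sigma_n\big)$ and $H_2(\sigma_0,\dots,\sigma_n) = N_*(\circ_E)\big((e,\dots,e) \otimes SHI(\sigma_0,\dots,\sigma_n)^{\otimes 2}\big)$, where $SHI : N_*(E(2)\times E(2)) \to N_{*+1}(E(2)\times E(2))$ is the Shih homotopy (an explicit chain homotopy with $\partial SHI = EZ\circ AW + \mathrm{id}$) applied to the diagonal simplex $(\sigma_0,\dots,\sigma_n)\times(\sigma_0,\dots,\sigma_n)$, and the resulting chain of $E(2)\times E(2)$ is composed with the constant simplex $(e,\dots,e)\in E(2)$ via $\circ_E : E(2)\times E(2)\times E(2)\to E(4)$. *)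

theory Defs
  imports Main
begin

text \<open>A permutation in Sigma_r is the list [s 0, ..., s (r-1)] of its values.\<close>

type_synonym perm = "nat list"
type_synonym simp = "perm list"    \<comment> \<open>an n-simplex (s_0,...,s_n) of E(r)\<close>
type_synonym chain = "simp list"   \<comment> \<open>a formal F2-sum of simplices\<close>

definition is_perm :: "nat \<Rightarrow> perm \<Rightarrow> bool" where
  "is_perm r p \<longleftrightarrow> distinct p \<and> set p = {..<r}"

definition pcomp :: "perm \<Rightarrow> perm \<Rightarrow> perm" where
  "pcomp p q = map (\<lambda>k. p ! k) q"

text \<open>Operadic composition of permutations gamma(s; t_0,...,t_(r-1)) (block permutation).\<close>
definition perm_gamma :: "perm \<Rightarrow> perm list \<Rightarrow> perm" where
  "perm_gamma s ts = concat (map (\<lambda>v. map (\<lambda>t. sum_list (map length (take v ts)) + t) (ts ! v)) s)"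

definition is_simp :: "nat \<Rightarrow> simp \<Rightarrow> bool" where
  "is_simp r s \<longleftrightarrow> s \<noteq> [] \<and> (\<forall>p\<in>set s. is_perm r p)"

definition arity :: "simp \<Rightarrow> nat" where
  "arity s = length (hd s)"

definition degenerate :: "'x list \<Rightarrow> bool" where
  "degenerate s \<longleftrightarrow> (\<exists>k. Suc k < length s \<and> s ! k = s ! Suc k)"

definition face :: "nat \<Rightarrow> 'x list \<Rightarrow> 'x list" where
  "face j s = take j s @ drop (Suc j) s"

definition degen :: "nat \<Rightarrow> 'x list \<Rightarrow> 'x list" where
  "degen j s = take (Suc j) s @ drop j s"

text \<open>degens [j_1,...,j_k] s = s_(j_k) ... s_(j_1) s  (j_1 applied first).\<close>
definition degens :: "nat list \<Rightarrow> 'x list \<Rightarrow> 'x list" where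
  "degens js s = foldl (\<lambda>t j. degen j t) s js"

definition bd :: "'x list \<Rightarrow> 'x list list" where
  "bd s = (if length s \<le> 1 then [] else map (\<lambda>j. face j s) [0..<length s])"

definition lmul :: "perm \<Rightarrow> simp \<Rightarrow> simp" where
  "lmul g s = map (pcomp g) s"

text \<open>EZ of a p-simplex and a q-simplex: the (p+q)-simplices of the product given by all
  (p,q)-shuffles (staircase paths), as lists of pairs of vertices. Signs vanish over F2.\<close>
fun ez2 :: "'x list \<Rightarrow> 'y list \<Rightarrow> ('x \<times> 'y) list list" where
  "ez2 [] ys = []"
| "ez2 xs [] = []"
| "ez2 [x] ys = [map (Pair x) ys]"
| "ez2 xs [y] = [map (\<lambda>x. (x, y)) xs]"
| "ez2 (x # x' # xs) (y # y' # ys) =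
     map (Cons (x, y)) (ez2 (x' # xs) (y # y' # ys) @ ez2 (x # x' # xs) (y' # ys))"

text \<open>Iterated EZ on a list of simplices; result simplices have tuples (lists) as vertices.\<close>
fun ezm :: "'x list list \<Rightarrow> 'x list list list" where
  "ezm [] = [[[]]]"
| "ezm (x # xs) = concat (map (\<lambda>z. map (map (\<lambda>(a, t). a # t)) (ez2 x z)) (ezm xs))"

text \<open>Operadic composition of E: N_*(circ_E) composed with EZ.\<close>
definition compE :: "simp \<Rightarrow> simp list \<Rightarrow> chain" where
  "compE x ys = map (map (\<lambda>t. perm_gamma (hd t) (tl t))) (ezm (x # ys))"

definition actC :: "(simp \<Rightarrow> 'a::ab_group_add list \<Rightarrow> 'a) \<Rightarrow> chain \<Rightarrow> 'a list \<Rightarrow> 'a" where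
  "actC act c xs = sum_list (map (\<lambda>s. act s xs) c)"

text \<open>Differential on Hom(A^{\<otimes> r}, A): (\<partial>F) = d o F + F o d (no signs over F2).\<close>
definition homd :: "('a::ab_group_add \<Rightarrow> 'a) \<Rightarrow> ('a list \<Rightarrow> 'a) \<Rightarrow> 'a list \<Rightarrow> 'a" where
  "homd d F xs = d (F xs) + (\<Sum>k<length xs. F (xs[k := d (xs ! k)]))"

text \<open>An E-algebra: an F2-chain complex (A,d) with an operad morphism E \<rightarrow> End(A); a basis
  simplex s of E(r) acts as the multilinear map act s : A^r \<rightarrow> A.\<close>
definition E_algebra :: "('a::ab_group_add \<Rightarrow> 'a) \<Rightarrow> (simp \<Rightarrow> 'a list \<Rightarrow> 'a) \<Rightarrow> bool" where
  "E_algebra d act \<longleftrightarrow>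
     (\<forall>x::'a. x + x = 0) \<and>
     (\<forall>x y. d (x + y) = d x + d y) \<and>
     (\<forall>x. d (d x) = 0) \<and>
     (\<forall>r s xs k y z. is_simp r s \<and> length xs = r \<and> k < r \<longrightarrow>
        act s (xs[k := y + z]) = act s (xs[k := y]) + act s (xs[k := z])) \<and>
     (\<forall>r s xs. is_simp r s \<and> degenerate s \<and> length xs = r \<longrightarrow> act s xs = 0) \<and>
     (\<forall>r s xs. is_simp r s \<and> length xs = r \<longrightarrow> homd d (act s) xs = actC act (bd s) xs) \<and>
     (\<forall>r g s xs. is_perm r g \<and> is_simp r s \<and> length xs = r \<longrightarrow>
        act (lmul g s) xs = act s (map (\<lambda>k. xs ! (g ! k)) [0..<r])) \<and>
     (\<forall>x ys xs. ys \<noteq> [] \<and> is_simp (length ys) x \<and>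
        (\<forall>y\<in>set ys. 1 \<le> arity y \<and> is_simp (arity y) y) \<and>
        length xs = sum_list (map arity ys) \<longrightarrow>
        actC act (compE x ys) xs =
          act x (map (\<lambda>k. act (ys ! k)
                    (take (arity (ys ! k)) (drop (sum_list (map arity (take k ys))) xs)))
                 [0..<length ys])) \<and>
     (\<forall>x. act [[0]] [x] = x)"

definition xt :: "nat \<Rightarrow> simp" where
  "xt i = map (\<lambda>k. if even k then [0, 1] else [1, 0]) [0..<Suc i]"

definition cup :: "(simp \<Rightarrow> 'a list \<Rightarrow> 'a) \<Rightarrow> nat \<Rightarrow> 'a \<Rightarrow> 'a \<Rightarrow> 'a" where
  "cup act i a b = act (xt i) [a, b]"

text \<open>f, g : Sigma_2 \<rightarrow> Sigma_4 with f(12) = (13)(24), g(12) = (12)(34) (0-indexed one-line).\<close>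
definition fS :: "perm \<Rightarrow> perm" where
  "fS s = (if s = [1, 0] then [2, 3, 0, 1] else [0, 1, 2, 3])"

definition gS :: "perm \<Rightarrow> perm" where
  "gS s = (if s = [1, 0] then [1, 0, 3, 2] else [0, 1, 2, 3])"

definition t23 :: perm where
  "t23 = [0, 2, 1, 3]"

definition H1 :: "simp \<Rightarrow> chain" where
  "H1 s = map (\<lambda>i. map (\<lambda>p. pcomp t23 (fS p)) (take (Suc i) s) @ map gS (drop i s))
             [0..<length s]"

text \<open>The Shih homotopy on N_*(X \<times> Y) (mod 2), applied to an m-simplex (a, b):
  sum over 0 \<le> q \<le> m-1, 0 \<le> p \<le> m-q-1 and (p+1,q)-shuffles (al, be) of {0..p+q}, with mb = m-p-q, of
  (s_(be+mb) s_(mb-1) d_(m-q+1)...d_m a,  s_(al+mb) d_mb ... d_(m-q-1) b).\<close>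
definition shi :: "'x list \<times> 'y list \<Rightarrow> ('x list \<times> 'y list) list" where
  "shi ab = (let a = fst ab; b = snd ab; m = length a - 1 in
     concat (map (\<lambda>q. concat (map (\<lambda>p. let mb = m - p - q in
        map (\<lambda>al. let be = filter (\<lambda>k. k \<notin> set al) [0..<p + q + 1] in
               (degens (map (\<lambda>k. k + mb) be) (degen (mb - 1) (take (m - q + 1) a)),
                degens (map (\<lambda>k. k + mb) al) (take mb b @ drop (m - q) b)))
          (filter (\<lambda>al. length al = p + 1) (subseqs [0..<p + q + 1])))
       [0..<m - q])) [0..<m]))"

definition H2 :: "simp \<Rightarrow> chain" where
  "H2 s = map (\<lambda>(u, v). map (\<lambda>(e, a, b). perm_gamma e [a, b])
                         (zip (replicate (length u) [0, 1]) (zip u v)))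
            (shi (s, s))"

text \<open>zeta_i as a 4-ary operation: (H1 + H2)(x~_i) acting on A^{\<otimes> 4}; zeta_i(a \<otimes> b) is
  zeta_op act i [a, a, b, b].\<close>
definition zeta_op :: "(simp \<Rightarrow> 'a::ab_group_add list \<Rightarrow> 'a) \<Rightarrow> nat \<Rightarrow> 'a list \<Rightarrow> 'a" where
  "zeta_op act i = actC act (H1 (xt i) @ H2 (xt i))"

end

theory Submission
  imports Defs
begin

text \<open>Let \<open>K = {e, (12), (34), (12)(34)} \<subseteq> \<Sigma>\<^sub>4\<close>. It fixes \<open>\<alpha> \<otimes> \<alpha> \<otimes> \<beta> \<otimes> \<beta>\<close>, so the value there
  of a simplex with vertices in \<open>K\<close> depends only on its word of successive quotients, and it
  vanishes if the word contains \<open>e\<close>. The terms of \<open>(\<alpha> \<union>\<^sub>j \<alpha>) \<union>\<^sub>0 (\<beta> \<union>\<^sub>k \<beta>)\<close> are the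
  Eilenberg-Zilber shuffles of \<open>x\<^sub>j\<close> and \<open>x\<^sub>k\<close>, whose words are the words in \<open>(12)\<close> and \<open>(34)\<close>
  with \<open>j\<close> letters \<open>(12)\<close>; so the Cartan sum is the sum over all words of length \<open>i\<close> in these
  two letters.

  In the boundary of \<open>H\<^sub>1(x\<^sub>i)\<close> all interior faces are degenerate except two per simplex, which
  telescope, and the outer faces of consecutive simplices differ by \<open>(12)(34)\<close>. What remains is
  the simplex \<open>(23) f(x\<^sub>i)\<close>, which computes \<open>(\<alpha> \<union>\<^sub>0 \<beta>) \<union>\<^sub>i (\<alpha> \<union>\<^sub>0 \<beta>)\<close>, and the constant word
  \<open>((12)(34))\<^sup>i\<close>. The Shih-homotopy terms of \<open>H\<^sub>2(x\<^sub>i)\<close> are \<open>K\<close>-simplices; those with \<open>p\<close> odd are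
  degenerate, the others have words \<open>((12)(34))\<^sup>i\<^sup>-\<^sup>N (34) w\<close> with \<open>w\<close> a word of length \<open>N\<close>
  with an odd number of letters \<open>(12)\<close>, and their boundaries add up to the same constant word
  plus all words of length \<open>i\<close> in \<open>(12)\<close> and \<open>(34)\<close>. Over \<open>\<bbbF>\<^sub>2\<close> the constant words cancel.\<close>

section \<open>Words in the Klein four-group\<close>

text \<open>A letter \<open>(a, b)\<close> stands for the permutation \<open>(12)\<^sup>a (34)\<^sup>b\<close> of the Klein four-group
  inside \<open>\<Sigma>\<^sub>4\<close>. A word \<open>l\<^sub>1 \<dots> l\<^sub>n\<close> records the successive quotients of the vertices of an
  \<open>n\<close>-simplex with vertices in that group, so the faces of the simplex correspond to
  dropping the first letter, multiplying two adjacent letters, or dropping the last letter.\<close>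

type_synonym klein = "bool \<times> bool"
type_synonym word = "klein list"

definition kadd :: "klein \<Rightarrow> klein \<Rightarrow> klein" where
  "kadd x y = (fst x \<noteq> fst y, snd x \<noteq> snd y)"

fun word_faces :: "word \<Rightarrow> word list" where
  "word_faces [] = []"
| "word_faces [l] = [[], []]"
| "word_faces (l # l' # w) =
     (l' # w) # (kadd l l' # w) # map (Cons l) (tl (word_faces (l' # w)))"

definition wsum :: "(word \<Rightarrow> 'a::ab_group_add) \<Rightarrow> word list \<Rightarrow> 'a" where
  "wsum V X = sum_list (map V X)"

definition face_sum :: "(word \<Rightarrow> 'a::ab_group_add) \<Rightarrow> word \<Rightarrow> 'a" where
  "face_sum V w = wsum V (word_faces w)"

definition face_sum_pos :: "(word \<Rightarrow> 'a::ab_group_add) \<Rightarrow> word \<Rightarrow> 'a" where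
  "face_sum_pos V w = wsum V (tl (word_faces w))"

definition null_on_degenerate :: "(word \<Rightarrow> 'a::ab_group_add) \<Rightarrow> bool" where
  "null_on_degenerate V \<longleftrightarrow> (\<forall>w. (False, False) \<in> set w \<longrightarrow> V w = 0)"

text \<open>The words in \<open>(12)\<close> and \<open>(34)\<close> with \<open>j\<close> letters \<open>(12)\<close> and \<open>k\<close> letters \<open>(34)\<close> are the
  nondegenerate simplices of \<open>\<Delta>\<^sup>j \<times> \<Delta>\<^sup>k\<close>.\<close>

fun shuffle_words :: "nat \<Rightarrow> word list" where
  "shuffle_words 0 = [[]]"
| "shuffle_words (Suc n) =
     map (Cons (True, False)) (shuffle_words n) @ map (Cons (False, True)) (shuffle_words n)"

definition count_12 :: "word \<Rightarrow> nat" where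
  "count_12 w = length (filter (\<lambda>l. l = (True, False)) w)"

definition count_words :: "nat \<Rightarrow> nat \<Rightarrow> word list" where
  "count_words k n = filter (\<lambda>w. count_12 w = k) (shuffle_words n)"

definition odd_words :: "nat \<Rightarrow> word list" where
  "odd_words n = filter (\<lambda>w. odd (count_12 w)) (shuffle_words n)"

definition even_words :: "nat \<Rightarrow> word list" where
  "even_words n = filter (\<lambda>w. even (count_12 w)) (shuffle_words n)"

fun shih_words :: "nat \<Rightarrow> word list" where
  "shih_words 0 = []"
| "shih_words (Suc n) =
     map (Cons (False, True)) (odd_words (Suc n)) @ map (Cons (True, True)) (shih_words n)"

lemma add_self_cancel_left:
  fixes x y :: "'a::ab_group_add"
  assumes "\<And>z::'a. z + z = 0"
  shows "x + (x + y) = y"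
  by (metis add.assoc add_0 assms)

lemma wsum_Nil [simp]: "wsum V [] = 0"
  by (simp add: wsum_def)

lemma wsum_Cons [simp]: "wsum V (x # X) = V x + wsum V X"
  by (simp add: wsum_def)

lemma wsum_append [simp]: "wsum V (X @ Y) = wsum V X + wsum V Y"
  by (simp add: wsum_def)

lemma wsum_map [simp]: "wsum V (map f X) = wsum (\<lambda>w. V (f w)) X"
  by (simp add: wsum_def o_def)

lemma wsum_zero: "wsum (\<lambda>w. 0) X = 0"
  by (induct X) simp_all

lemma wsum_filter_partition: "wsum V (filter P X) + wsum V (filter (\<lambda>x. \<not> P x) X) = wsum V X"
  by (induct X) (simp_all add: ac_simps)

lemma null_on_degenerate_Cons: "null_on_degenerate V \<Longrightarrow> null_on_degenerate (\<lambda>u. V (l # u))"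
  by (simp add: null_on_degenerate_def)

lemma null_on_degenerate_zero: "null_on_degenerate V \<Longrightarrow> V ((False, False) # u) = 0"
  by (simp add: null_on_degenerate_def)

lemma count_12_simps [simp]:
  "count_12 [] = 0"
  "count_12 ((True, False) # w) = Suc (count_12 w)"
  "count_12 ((False, True) # w) = count_12 w"
  "count_12 ((True, True) # w) = count_12 w"
  by (simp_all add: count_12_def)

lemma length_shuffle_words: "w \<in> set (shuffle_words n) \<Longrightarrow> length w = n"
  by (induct n arbitrary: w) auto

lemma count_12_shuffle_words: "w \<in> set (shuffle_words n) \<Longrightarrow> count_12 w \<le> n"
  by (induct n arbitrary: w) (auto simp: le_SucI)

lemma count_words_0: "count_words 0 n = [replicate n (False, True)]"
  by (induct n) (auto simp: count_words_def filter_map o_def)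

lemma count_words_diag: "count_words n n = [replicate n (True, False)]"
proof (induct n)
  case 0
  then show ?case by (simp add: count_words_def)
next
  case (Suc n)
  have "filter (\<lambda>w. count_12 w = Suc n) (shuffle_words n) = []"
    using count_12_shuffle_words by (auto simp: filter_empty_conv) (metis Suc_n_not_le_n)
  then show ?case using Suc by (simp add: count_words_def filter_map o_def)
qed

lemma count_words_Suc:
  "count_words (Suc j) (Suc n) =
     map (Cons (True, False)) (count_words j n) @ map (Cons (False, True)) (count_words (Suc j) n)"
  by (simp add: count_words_def filter_map o_def)

lemma odd_words_0 [simp]: "odd_words 0 = []"
  by (simp add: odd_words_def)

lemma even_words_0 [simp]: "even_words 0 = [[]]"
  by (simp add: even_words_def)

lemma odd_words_Suc:
  "odd_words (Suc n) =
     map (Cons (True, False)) (even_words n) @ map (Cons (False, True)) (odd_words n)"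
  by (simp add: odd_words_def even_words_def filter_map o_def)

lemma even_words_Suc:
  "even_words (Suc n) =
     map (Cons (True, False)) (odd_words n) @ map (Cons (False, True)) (even_words n)"
  by (simp add: odd_words_def even_words_def filter_map o_def)

lemma wsum_odd_even_words:
  "wsum V (odd_words n) + wsum V (even_words n) = wsum V (shuffle_words n)"
  unfolding odd_words_def even_words_def
  using wsum_filter_partition[of V "\<lambda>w. odd (count_12 w)"] by simp

lemma shuffle_words_Suc_nonempty: "u \<in> set (shuffle_words (Suc n)) \<Longrightarrow> u \<noteq> []"
  using length_shuffle_words by fastforce

lemma odd_words_Suc_nonempty: "u \<in> set (odd_words (Suc n)) \<Longrightarrow> u \<noteq> []"
  unfolding odd_words_def using shuffle_words_Suc_nonempty by auto

lemma even_words_Suc_nonempty: "u \<in> set (even_words (Suc n)) \<Longrightarrow> u \<noteq> []"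
  unfolding even_words_def using shuffle_words_Suc_nonempty by auto

lemma length_shih_words: "u \<in> set (shih_words n) \<Longrightarrow> length u = Suc n"
  by (induct n arbitrary: u) (auto simp: odd_words_def dest: length_shuffle_words)

lemma shih_words_nonempty: "u \<in> set (shih_words n) \<Longrightarrow> u \<noteq> []"
  using length_shih_words by fastforce

lemma word_faces_nonempty: "w \<noteq> [] \<Longrightarrow> word_faces w = tl w # tl (word_faces w)"
  by (cases w rule: word_faces.cases) auto

lemma face_sum_eq: "w \<noteq> [] \<Longrightarrow> face_sum V w = V (tl w) + face_sum_pos V w"
  unfolding face_sum_def face_sum_pos_def by (subst word_faces_nonempty) auto

lemma face_sum_pos_single [simp]: "face_sum_pos V [l] = V []"
  by (simp add: face_sum_pos_def)

lemma face_sum_pos_Cons: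
  "u \<noteq> [] \<Longrightarrow> face_sum_pos V (l # u) = V (kadd l (hd u) # tl u) + face_sum_pos (\<lambda>w. V (l # w)) u"
  by (cases u) (simp_all add: face_sum_pos_def)

lemma wsum_face_sum_pos_Cons:
  "(\<And>u. u \<in> set X \<Longrightarrow> u \<noteq> []) \<Longrightarrow>
   wsum (\<lambda>u. face_sum_pos V (l # u)) X =
     wsum (\<lambda>u. V (kadd l (hd u) # tl u)) X + wsum (face_sum_pos (\<lambda>w. V (l # w))) X"
  by (induct X) (simp_all add: face_sum_pos_Cons ac_simps)

lemma wsum_face_sum_Cons:
  "(\<And>u. u \<in> set X \<Longrightarrow> u \<noteq> []) \<Longrightarrow>
   wsum (\<lambda>u. face_sum V (l # u)) X =
     wsum V X + wsum (\<lambda>u. V (kadd l (hd u) # tl u)) X + wsum (face_sum_pos (\<lambda>w. V (l # w))) X"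
  by (induct X) (simp_all add: face_sum_eq face_sum_pos_Cons ac_simps)

lemma wsum_face_sum_pos:
  fixes V :: "word \<Rightarrow> 'a::ab_group_add"
  assumes char2: "\<And>x::'a. x + x = 0" and ne: "\<And>u. u \<in> set X \<Longrightarrow> u \<noteq> []"
  shows "wsum (face_sum_pos V) X = wsum (face_sum V) X + wsum (\<lambda>u. V (tl u)) X"
  using ne by (induct X) (simp_all add: face_sum_eq ac_simps char2 add_self_cancel_left[OF char2])

text \<open>Merging the first two letters of a word in \<open>(12)\<close> and \<open>(34)\<close> gives either a degenerate
  word or one starting with \<open>(12)(34)\<close>, and over \<open>\<bbbF>\<^sub>2\<close> the latter cancel in pairs between
  the words starting with \<open>(12)\<close> and those starting with \<open>(34)\<close>.\<close>

lemma wsum_face_sum_pos_parity_words: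
  fixes V :: "word \<Rightarrow> 'a::ab_group_add"
  assumes char2: "\<And>x::'a. x + x = 0" and "null_on_degenerate V"
  shows "wsum (face_sum_pos V) (odd_words (Suc n)) = wsum V (shuffle_words n)
    \<and> wsum (face_sum_pos V) (even_words (Suc n)) = wsum V (shuffle_words n)"
  using assms(2)
proof (induct n arbitrary: V)
  case 0
  then show ?case by (simp add: odd_words_def even_words_def)
next
  case (Suc n)
  have zero: "\<And>u. V ((False, False) # u) = 0"
    using Suc.prems null_on_degenerate_zero by blast
  have IH12: "wsum (face_sum_pos (\<lambda>w. V ((True, False) # w))) (odd_words (Suc n)) =
      wsum (\<lambda>w. V ((True, False) # w)) (shuffle_words n)
    \<and> wsum (face_sum_pos (\<lambda>w. V ((True, False) # w))) (even_words (Suc n)) =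
      wsum (\<lambda>w. V ((True, False) # w)) (shuffle_words n)"
    and IH34: "wsum (face_sum_pos (\<lambda>w. V ((False, True) # w))) (odd_words (Suc n)) =
      wsum (\<lambda>w. V ((False, True) # w)) (shuffle_words n)
    \<and> wsum (face_sum_pos (\<lambda>w. V ((False, True) # w))) (even_words (Suc n)) =
      wsum (\<lambda>w. V ((False, True) # w)) (shuffle_words n)"
    using Suc.hyps Suc.prems null_on_degenerate_Cons by blast+
  have merge_odd: "wsum (\<lambda>u. V (kadd l (hd u) # tl u)) (odd_words (Suc n)) =
      wsum (\<lambda>u. V (kadd l (True, False) # u)) (even_words n)
      + wsum (\<lambda>u. V (kadd l (False, True) # u)) (odd_words n)" for l
    by (simp add: odd_words_Suc)
  have merge_even: "wsum (\<lambda>u. V (kadd l (hd u) # tl u)) (even_words (Suc n)) =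
      wsum (\<lambda>u. V (kadd l (True, False) # u)) (odd_words n)
      + wsum (\<lambda>u. V (kadd l (False, True) # u)) (even_words n)" for l
    by (simp add: even_words_Suc)
  have faces_12_even: "wsum (\<lambda>u. face_sum_pos V ((True, False) # u)) (even_words (Suc n)) =
      wsum (\<lambda>u. V ((True, True) # u)) (even_words n)
      + wsum (face_sum_pos (\<lambda>w. V ((True, False) # w))) (even_words (Suc n))"
    by (subst wsum_face_sum_pos_Cons, erule even_words_Suc_nonempty)
      (simp only: merge_even, simp add: kadd_def zero wsum_zero)
  have faces_34_odd: "wsum (\<lambda>u. face_sum_pos V ((False, True) # u)) (odd_words (Suc n)) =
      wsum (\<lambda>u. V ((True, True) # u)) (even_words n)
      + wsum (face_sum_pos (\<lambda>w. V ((False, True) # w))) (odd_words (Suc n))"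
    by (subst wsum_face_sum_pos_Cons, erule odd_words_Suc_nonempty)
      (simp only: merge_odd, simp add: kadd_def zero wsum_zero)
  have faces_12_odd: "wsum (\<lambda>u. face_sum_pos V ((True, False) # u)) (odd_words (Suc n)) =
      wsum (\<lambda>u. V ((True, True) # u)) (odd_words n)
      + wsum (face_sum_pos (\<lambda>w. V ((True, False) # w))) (odd_words (Suc n))"
    by (subst wsum_face_sum_pos_Cons, erule odd_words_Suc_nonempty)
      (simp only: merge_odd, simp add: kadd_def zero wsum_zero)
  have faces_34_even: "wsum (\<lambda>u. face_sum_pos V ((False, True) # u)) (even_words (Suc n)) =
      wsum (\<lambda>u. V ((True, True) # u)) (odd_words n)
      + wsum (face_sum_pos (\<lambda>w. V ((False, True) # w))) (even_words (Suc n))"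
    by (subst wsum_face_sum_pos_Cons, erule even_words_Suc_nonempty)
      (simp only: merge_even, simp add: kadd_def zero wsum_zero)
  show ?case
    apply (simp only: odd_words_Suc[of "Suc n"] even_words_Suc[of "Suc n"])
    apply (simp only: wsum_append wsum_map faces_12_even faces_34_odd faces_12_odd faces_34_even IH12 IH34 shuffle_words.simps)
    by (simp add: ac_simps char2 add_self_cancel_left[OF char2])
qed

lemma wsum_face_sum_shih_words:
  fixes V :: "word \<Rightarrow> 'a::ab_group_add"
  assumes char2: "\<And>x::'a. x + x = 0" and "null_on_degenerate V"
  shows "wsum (face_sum V) (shih_words n) = V (replicate n (True, True)) + wsum V (shuffle_words n)"
  using assms(2)
proof (induct n arbitrary: V)
  case 0
  then show ?case by (simp add: char2)
next
  case (Suc n)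
  have zero: "\<And>u. V ((False, False) # u) = 0"
    using Suc.prems null_on_degenerate_zero by blast
  have null: "null_on_degenerate (\<lambda>w. V ((True, True) # w))"
    "null_on_degenerate (\<lambda>w. V ((False, True) # w))"
    using Suc.prems null_on_degenerate_Cons by blast+
  have IH: "wsum (face_sum (\<lambda>w. V ((True, True) # w))) (shih_words n) =
      V ((True, True) # replicate n (True, True)) + wsum (\<lambda>w. V ((True, True) # w)) (shuffle_words n)"
    using Suc.hyps[OF null(1)] by simp
  have first_faces: "wsum V (shih_words n) + wsum (\<lambda>u. V (kadd (True, True) (hd u) # tl u)) (shih_words n)
      + wsum (\<lambda>u. V ((True, True) # tl u)) (shih_words n) =
      wsum (\<lambda>u. V ((False, True) # u)) (odd_words n) + wsum (\<lambda>u. V ((True, False) # u)) (odd_words n)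
      + wsum (\<lambda>u. V ((True, True) # u)) (odd_words n)"
  proof (cases n)
    case 0
    then show ?thesis by simp
  next
    case (Suc k)
    show ?thesis unfolding Suc shih_words.simps
      by (simp add: kadd_def zero wsum_zero ac_simps char2 add_self_cancel_left[OF char2])
  qed
  have faces_1234: "wsum (\<lambda>u. face_sum V ((True, True) # u)) (shih_words n) =
      wsum (\<lambda>u. V ((False, True) # u)) (odd_words n) + wsum (\<lambda>u. V ((True, False) # u)) (odd_words n)
      + wsum (\<lambda>u. V ((True, True) # u)) (odd_words n)
      + (V ((True, True) # replicate n (True, True)) + wsum (\<lambda>w. V ((True, True) # w)) (shuffle_words n))"
    apply (subst wsum_face_sum_Cons, erule shih_words_nonempty)
    apply (subst wsum_face_sum_pos[OF char2], erule shih_words_nonempty)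
    apply (simp only: IH first_faces[symmetric])
    by (simp add: ac_simps)
  have merge_34: "wsum (\<lambda>u. V (kadd (False, True) (hd u) # tl u)) (odd_words (Suc n)) =
      wsum (\<lambda>u. V ((True, True) # u)) (even_words n)"
    by (simp add: odd_words_Suc kadd_def zero wsum_zero)
  have faces_34: "wsum (\<lambda>u. face_sum V ((False, True) # u)) (odd_words (Suc n)) =
      wsum (\<lambda>u. V ((True, False) # u)) (even_words n) + wsum (\<lambda>u. V ((False, True) # u)) (odd_words n)
      + wsum (\<lambda>u. V ((True, True) # u)) (even_words n) + wsum (\<lambda>w. V ((False, True) # w)) (shuffle_words n)"
    apply (subst wsum_face_sum_Cons, erule odd_words_Suc_nonempty)
    apply (simp only: merge_34 wsum_face_sum_pos_parity_words[OF char2 null(2), THEN conjunct1])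
    by (simp add: odd_words_Suc)
  show ?case
    apply (simp only: shih_words.simps wsum_append wsum_map faces_1234 faces_34
        shuffle_words.simps replicate_Suc)
    apply (simp only: wsum_odd_even_words[symmetric])
    by (simp add: ac_simps char2 add_self_cancel_left[OF char2])
qed

lemma sum_wsum_filter_eq:
  fixes V :: "word \<Rightarrow> 'a::ab_group_add" and f :: "word \<Rightarrow> nat"
  shows "(\<forall>w\<in>set X. f w \<le> N) \<Longrightarrow> (\<Sum>j\<le>N. wsum V (filter (\<lambda>w. f w = j) X)) = wsum V X"
proof (induct X)
  case Nil
  then show ?case by simp
next
  case (Cons w X)
  have "(\<Sum>j\<le>N. wsum V (filter (\<lambda>u. f u = j) (w # X))) =
        (\<Sum>j\<le>N. (if f w = j then V w else 0) + wsum V (filter (\<lambda>u. f u = j) X))"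
    by (rule sum.cong) auto
  also have "\<dots> = (\<Sum>j\<le>N. (if f w = j then V w else 0)) + (\<Sum>j\<le>N. wsum V (filter (\<lambda>u. f u = j) X))"
    by (rule sum.distrib)
  also have "(\<Sum>j\<le>N. (if f w = j then V w else 0)) = V w"
    using Cons.prems by (subst sum.delta'[where b = "\<lambda>_. V w"]) auto
  finally show ?case using Cons by simp
qed

lemma sum_count_words: "(\<Sum>j\<le>n. wsum V (count_words j n)) = wsum V (shuffle_words n)"
  unfolding count_words_def by (rule sum_wsum_filter_eq) (simp add: count_12_shuffle_words)

lemma sum_even_wsum_filter_Suc:
  fixes V :: "word \<Rightarrow> 'a::ab_group_add" and f :: "word \<Rightarrow> nat"
  shows "(\<forall>w\<in>set X. f w \<le> N) \<Longrightarrow>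
    (\<Sum>p<N. if even p then wsum V (filter (\<lambda>w. f w = Suc p) X) else 0) =
      wsum V (filter (\<lambda>w. odd (f w)) X)"
proof (induct X)
  case Nil
  then show ?case by (simp only: filter.simps wsum_Nil if_cancel sum.neutral_const)
next
  case (Cons w X)
  have "(\<Sum>p<N. if even p then wsum V (filter (\<lambda>u. f u = Suc p) (w # X)) else 0) =
        (\<Sum>p<N. (if even p \<and> f w = Suc p then V w else 0)
          + (if even p then wsum V (filter (\<lambda>u. f u = Suc p) X) else 0))"
    by (rule sum.cong) auto
  also have "\<dots> = (\<Sum>p<N. if even p \<and> f w = Suc p then V w else 0)
      + (\<Sum>p<N. if even p then wsum V (filter (\<lambda>u. f u = Suc p) X) else 0)"
    by (rule sum.distrib)
  also have "(\<Sum>p<N. if even p \<and> f w = Suc p then V w else 0) = (if odd (f w) then V w else 0)"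
  proof (cases "odd (f w)")
    case True
    then obtain p0 where p0: "f w = Suc p0"
      by (cases "f w") auto
    have "p0 < N"
      using Cons.prems p0 by auto
    have "(\<Sum>p<N. if even p \<and> f w = Suc p then V w else 0) = (\<Sum>p<N. if p0 = p then V w else 0)"
      by (rule sum.cong) (use True p0 in auto)
    also have "\<dots> = V w"
      using \<open>p0 < N\<close> by (subst sum.delta'[where b = "\<lambda>_. V w"]) auto
    finally show ?thesis using True by simp
  next
    case False
    then show ?thesis by (auto intro!: sum.neutral)
  qed
  finally show ?case using Cons by simp
qed

lemma sum_even_count_words:
  "(\<Sum>p<N. if even p then wsum V (count_words (Suc p) N) else 0) = wsum V (odd_words N)"
  unfolding count_words_def odd_words_def
  by (rule sum_even_wsum_filter_Suc) (simp add: count_12_shuffle_words)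

lemma sum_shih_words:
  "(\<Sum>N\<in>{1..n}. wsum (\<lambda>w. V (replicate (n - N) (True, True) @ (False, True) # w)) (odd_words N)) =
     wsum V (shih_words n)"
proof (induct n arbitrary: V)
  case 0
  then show ?case by simp
next
  case (Suc n)
  have "(\<Sum>N\<in>{1..n}. wsum (\<lambda>w. V (replicate (Suc n - N) (True, True) @ (False, True) # w)) (odd_words N))
    = (\<Sum>N\<in>{1..n}. wsum (\<lambda>w. V ((True, True) # replicate (n - N) (True, True) @ (False, True) # w))
        (odd_words N))"
    by (rule sum.cong) (auto simp: Suc_diff_le)
  also have "\<dots> = wsum (\<lambda>w. V ((True, True) # w)) (shih_words n)"
    by (rule Suc.hyps)
  finally show ?case by (simp add: sum.cl_ivl_Suc ac_simps)
qed

definition indicator_word :: "nat list \<Rightarrow> nat \<Rightarrow> word" where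
  "indicator_word al N = map (\<lambda>r. (r \<in> set al, r \<notin> set al)) [0..<N]"

lemma subseqs_set: "al \<in> set (subseqs xs) \<Longrightarrow> set al \<subseteq> set xs"
  using subseqs_powset[of xs] by blast

lemma sorted_wrt_subseqs: "al \<in> set (subseqs xs) \<Longrightarrow> sorted_wrt R xs \<Longrightarrow> sorted_wrt R al"
proof (induct xs arbitrary: al)
  case Nil
  then show ?case by simp
next
  case (Cons x xs)
  show ?case
  proof (cases "al \<in> set (subseqs xs)")
    case True
    then show ?thesis using Cons by simp
  next
    case False
    then obtain al' where al: "al = x # al'" "al' \<in> set (subseqs xs)"
      using Cons.prems(1) by (auto simp: Let_def)
    then show ?thesis
      using Cons.hyps[of al'] Cons.prems(2) subseqs_set[OF al(2)] by auto
  qed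
qed

lemma indicator_words_upt:
  "map (\<lambda>al. map (\<lambda>r. (r \<in> set al, r \<notin> set al)) [k..<k + N]) (subseqs [k..<k + N]) = shuffle_words N"
proof (induct N arbitrary: k)
  case 0
  then show ?case by simp
next
  case (Suc N)
  let ?ind = "\<lambda>al. map (\<lambda>r. (r \<in> set al, r \<notin> set al)) [Suc k..<Suc k + N]"
  have upt: "[k..<k + Suc N] = k # [Suc k..<Suc k + N]"
    by (simp add: upt_conv_Cons del: upt_Suc)
  have above: "\<And>al. al \<in> set (subseqs [Suc k..<Suc k + N]) \<Longrightarrow> set al \<subseteq> {Suc k..<Suc k + N}"
    using subseqs_set by fastforce
  have with_k: "map (\<lambda>al. map (\<lambda>r. (r \<in> set al, r \<notin> set al)) (k # [Suc k..<Suc k + N]))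
      (map (Cons k) (subseqs [Suc k..<Suc k + N]))
    = map (Cons (True, False)) (map ?ind (subseqs [Suc k..<Suc k + N]))"
    by (auto intro!: map_cong)
  have without_k: "map (\<lambda>al. map (\<lambda>r. (r \<in> set al, r \<notin> set al)) (k # [Suc k..<Suc k + N]))
      (subseqs [Suc k..<Suc k + N])
    = map (Cons (False, True)) (map ?ind (subseqs [Suc k..<Suc k + N]))"
    using above by (fastforce intro!: map_cong)
  show ?case unfolding upt
    by (simp only: subseqs.simps Let_def map_append with_k without_k Suc shuffle_words.simps)
qed

lemma indicator_words: "map (\<lambda>al. indicator_word al N) (subseqs [0..<N]) = shuffle_words N"
  using indicator_words_upt[of 0 N] by (simp add: indicator_word_def)

lemma count_12_indicator_word:
  assumes al: "al \<in> set (subseqs [0..<N])"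
  shows "count_12 (indicator_word al N) = length al"
proof -
  have "count_12 (indicator_word al N) = card (set (filter (\<lambda>r. r \<in> set al) [0..<N]))"
    by (simp add: count_12_def indicator_word_def filter_map o_def distinct_card del: set_filter)
  also have "set (filter (\<lambda>r. r \<in> set al) [0..<N]) = set al"
    using subseqs_set[OF al] by auto
  also have "card (set al) = length al"
    by (rule distinct_card, rule subseqs_distinctD[OF al]) simp
  finally show ?thesis .
qed

lemma count_words_subseqs:
  "map (\<lambda>al. indicator_word al N) (filter (\<lambda>al. length al = K) (subseqs [0..<N])) = count_words K N"
proof -
  have "map (\<lambda>al. indicator_word al N) (filter (\<lambda>al. length al = K) (subseqs [0..<N])) =
        map (\<lambda>al. indicator_word al N)
          (filter ((\<lambda>w. count_12 w = K) \<circ> (\<lambda>al. indicator_word al N)) (subseqs [0..<N]))"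
    by (rule arg_cong[where f = "map _"], rule filter_cong) (simp_all add: count_12_indicator_word)
  also have "\<dots> = filter (\<lambda>w. count_12 w = K) (map (\<lambda>al. indicator_word al N) (subseqs [0..<N]))"
    by (simp add: filter_map)
  finally show ?thesis by (simp add: indicator_words count_words_def)
qed

lemma sum_triangle_reindex:
  fixes f :: "nat \<Rightarrow> nat \<Rightarrow> 'a::comm_monoid_add"
  shows "(\<Sum>q<n. \<Sum>p<n - q. f (p + q + 1) p) = (\<Sum>N\<in>{1..n}. \<Sum>p<N. f N p)"
proof (induct n)
  case 0
  then show ?case by simp
next
  case (Suc n)
  have "(\<Sum>q<Suc n. \<Sum>p<Suc n - q. f (p + q + 1) p)
      = (\<Sum>q<Suc n. (\<Sum>p<n - q. f (p + q + 1) p) + f (Suc n) (n - q))"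
    by (rule sum.cong) (auto simp: Suc_diff_le)
  also have "\<dots> = (\<Sum>q<Suc n. \<Sum>p<n - q. f (p + q + 1) p) + (\<Sum>q<Suc n. f (Suc n) (n - q))"
    by (rule sum.distrib)
  also have "(\<Sum>q<Suc n. \<Sum>p<n - q. f (p + q + 1) p) = (\<Sum>q<n. \<Sum>p<n - q. f (p + q + 1) p)"
    by simp
  also have "(\<Sum>q<Suc n. f (Suc n) (n - q)) = (\<Sum>p<Suc n. f (Suc n) p)"
    using sum.nat_diff_reindex[of "f (Suc n)" "Suc n"] by simp
  finally show ?case using Suc by (simp add: sum.cl_ivl_Suc)
qed

section \<open>Simplices of \<open>E(4)\<close> with vertices in the Klein four-group\<close>

definition perm2 :: "bool \<Rightarrow> perm" where
  "perm2 b = (if b then [1, 0] else [0, 1])"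

definition kperm :: "klein \<Rightarrow> perm" where
  "kperm g = (if fst g then [1, 0] else [0, 1]) @ (if snd g then [3, 2] else [2, 3])"

fun ksimp :: "klein \<Rightarrow> word \<Rightarrow> simp" where
  "ksimp g [] = [kperm g]"
| "ksimp g (l # w) = kperm g # ksimp (kadd g l) w"

lemma kadd_assoc: "kadd g (kadd h l) = kadd (kadd g h) l"
  by (auto simp: kadd_def)

lemma pcomp_kperm: "pcomp (kperm g) (kperm h) = kperm (kadd g h)"
  by (cases g; cases h) (auto simp: pcomp_def kperm_def kadd_def)

lemma lmul_kperm_ksimp: "lmul (kperm g) (ksimp h w) = ksimp (kadd g h) w"
  by (induct w arbitrary: h) (simp_all add: lmul_def pcomp_kperm kadd_assoc)

lemma ksimp_eq_lmul: "ksimp g w = lmul (kperm g) (ksimp (False, False) w)"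
  by (simp add: lmul_kperm_ksimp kadd_def)

lemma is_perm_kperm: "is_perm 4 (kperm g)"
  by (cases g) (auto simp: is_perm_def kperm_def)

lemma set_ksimp: "p \<in> set (ksimp g w) \<Longrightarrow> \<exists>h. p = kperm h"
  by (induct w arbitrary: g) fastforce+

lemma is_simp_ksimp: "is_simp 4 (ksimp g w)"
  unfolding is_simp_def by (cases w) (auto dest!: set_ksimp simp: is_perm_kperm)

lemma length_ksimp [simp]: "length (ksimp g w) = Suc (length w)"
  by (induct w arbitrary: g) auto

lemma degenerate_Cons: "degenerate s \<Longrightarrow> degenerate (x # s)"
  unfolding degenerate_def by (metis Suc_less_eq length_Cons nth_Cons_Suc)

lemma degenerate_ksimp: "(False, False) \<in> set w \<Longrightarrow> degenerate (ksimp g w)"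
proof (induct w arbitrary: g)
  case Nil
  then show ?case by simp
next
  case (Cons l w)
  show ?case
  proof (cases "l = (False, False)")
    case True
    then show ?thesis
      unfolding degenerate_def by (cases w) (auto intro!: exI[of _ 0] simp: kadd_def)
  next
    case False
    then show ?thesis
      using Cons by (simp add: degenerate_Cons)
  qed
qed

lemma bd_Cons:
  assumes "2 \<le> length s"
  shows "bd (x # s) = s # map (Cons x) (bd s)"
proof -
  have "s \<noteq> []"
    using assms by auto
  with assms show ?thesis
    unfolding bd_def face_def by (simp add: upt_conv_Cons map_Suc_upt[symmetric] del: upt_Suc)
qed

lemma bd_ksimp:
  "w \<noteq> [] \<Longrightarrow> bd (ksimp g w) = ksimp (kadd g (hd w)) (tl w) # map (ksimp g) (tl (word_faces w))"
proof (induct w arbitrary: g)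
  case Nil
  then show ?case by simp
next
  case (Cons l w)
  show ?case
  proof (cases w)
    case Nil
    then show ?thesis by (simp add: bd_def face_def)
  next
    case (Cons l' w')
    have IH: "bd (ksimp (kadd g l) w) =
        ksimp (kadd (kadd g l) l') w' # map (ksimp (kadd g l)) (tl (word_faces w))"
      using Cons.hyps[of "kadd g l"] Cons by simp
    have "bd (ksimp g (l # w)) = ksimp (kadd g l) w # map (Cons (kperm g)) (bd (ksimp (kadd g l) w))"
      using Cons by (simp only: ksimp.simps) (rule bd_Cons, simp)
    also have "\<dots> = ksimp (kadd g l) w # map (Cons (kperm g))
        (ksimp (kadd (kadd g l) l') w' # map (ksimp (kadd g l)) (tl (word_faces w)))"
      by (simp only: IH)
    finally show ?thesis
      using Cons by (simp add: kadd_assoc o_def)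
  qed
qed

section \<open>Sign changes of boolean sequences\<close>

fun changes :: "'x list \<Rightarrow> bool list" where
  "changes (x # y # r) = (x \<noteq> y) # changes (y # r)"
| "changes _ = []"

definition step_word :: "(bool \<times> bool) list \<Rightarrow> word" where
  "step_word \<pi> = zip (changes (map fst \<pi>)) (changes (map snd \<pi>))"

definition is_alternating :: "bool list \<Rightarrow> bool" where
  "is_alternating P \<longleftrightarrow> (\<forall>s\<in>set (changes P). s)"

definition alternating_list :: "nat \<Rightarrow> bool list" where
  "alternating_list n = map odd [0..<Suc n]"

lemma length_changes [simp]: "length (changes L) = length L - 1"
  by (induct L rule: changes.induct) auto

lemma changes_Cons: "L \<noteq> [] \<Longrightarrow> changes (x # L) = (x \<noteq> hd L) # changes L"
  by (cases L) auto

lemma changes_append: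
  "X \<noteq> [] \<Longrightarrow> Y \<noteq> [] \<Longrightarrow> changes (X @ Y) = changes X @ (last X \<noteq> hd Y) # changes Y"
  by (induct X rule: changes.induct) (auto simp: changes_Cons)

lemma changes_const: "(\<forall>y\<in>set L. y = x) \<Longrightarrow> changes L = replicate (length L - 1) False"
  by (induct L rule: changes.induct) auto

lemma changes_alternating: "is_alternating P \<Longrightarrow> changes P = replicate (length P - 1) True"
  unfolding is_alternating_def by (metis length_changes replicate_length_same)

lemma is_alternating_Cons2: "is_alternating (x # x' # r) \<Longrightarrow> is_alternating (x' # r) \<and> x \<noteq> x'"
  by (auto simp: is_alternating_def)

lemma changes_odd_upt: "changes (map odd [k..<k + Suc m]) = replicate m True"
proof (induct m arbitrary: k)
  case 0
  then show ?case by simp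
next
  case (Suc m)
  have "[k..<k + Suc (Suc m)] = k # [Suc k..<Suc k + Suc m]"
    by (simp add: upt_conv_Cons del: upt_Suc)
  then show ?case
    using Suc[of "Suc k"] by (simp add: changes_Cons upt_conv_Cons del: upt_Suc)
qed

lemma changes_alternating_list: "changes (alternating_list n) = replicate n True"
  using changes_odd_upt[of 0 n] by (simp add: alternating_list_def del: upt_Suc)

lemma alternating_list_is_alternating: "is_alternating (alternating_list n)"
  by (simp add: is_alternating_def changes_alternating_list)

lemma alternating_list_nonempty [simp]: "alternating_list n \<noteq> []"
  by (simp add: alternating_list_def)

lemma length_alternating_list [simp]: "length (alternating_list n) = Suc n"
  by (simp add: alternating_list_def)

lemma take_alternating_list: "k \<le> n \<Longrightarrow> take (Suc k) (alternating_list n) = alternating_list k"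
  by (simp add: alternating_list_def take_map del: upt_Suc)

lemma xt_alternating_list: "xt i = map perm2 (alternating_list i)"
  by (simp add: xt_def alternating_list_def perm2_def)

lemma step_word_Cons:
  "\<pi> \<noteq> [] \<Longrightarrow> step_word (p # \<pi>) = (fst p \<noteq> fst (hd \<pi>), snd p \<noteq> snd (hd \<pi>)) # step_word \<pi>"
  by (cases \<pi>) (auto simp: step_word_def)

lemma map_kperm_zip:
  "length U = length W \<Longrightarrow> U \<noteq> [] \<Longrightarrow>
   map kperm (zip U W) = ksimp (hd U, hd W) (zip (changes U) (changes W))"
proof (induct U arbitrary: W)
  case Nil
  then show ?case by simp
next
  case (Cons x U)
  then obtain y W' where W: "W = y # W'"
    by (cases W) auto
  show ?case
  proof (cases U)
    case Nil
    then show ?thesis using Cons W by simp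
  next
    case (Cons x' U')
    then obtain y' W'' where "W' = y' # W''"
      using Cons.prems W by (cases W') auto
    moreover have "x = (x = x') \<longleftrightarrow> x'" for x x' :: bool
      by blast
    ultimately show ?thesis
      using Cons Cons.prems Cons.hyps[of W'] W by (auto simp: kadd_def)
  qed
qed

lemma map_kperm_eq_ksimp: "\<pi> \<noteq> [] \<Longrightarrow> map kperm \<pi> = ksimp (hd \<pi>) (step_word \<pi>)"
  using map_kperm_zip[of "map fst \<pi>" "map snd \<pi>"]
  by (simp add: zip_map_fst_snd step_word_def hd_map)

section \<open>The Eilenberg-Zilber map on \<open>x\<^sub>j \<otimes> x\<^sub>k\<close>\<close>

lemma ez2_single_right: "xs \<noteq> [] \<Longrightarrow> ez2 xs [y] = [map (\<lambda>x. (x, y)) xs]"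
  by (cases xs rule: remdups_adj.cases) auto

lemma ez2_single_left: "ys \<noteq> [] \<Longrightarrow> ez2 [x] ys = [map (Pair x) ys]"
  by (cases ys) auto

lemma ez2_map: "ez2 (map f xs) (map g ys) = map (map (map_prod f g)) (ez2 xs ys)"
  by (induct xs ys rule: ez2.induct) (auto simp: o_def)

lemma ez2_hd: "\<pi> \<in> set (ez2 P Q) \<Longrightarrow> \<pi> \<noteq> [] \<and> hd \<pi> = (hd P, hd Q)"
  by (induct P Q arbitrary: \<pi> rule: ez2.induct) auto

lemma ezm_single: "y \<noteq> [] \<Longrightarrow> ezm [y] = [map (\<lambda>x. [x]) y]"
  by (simp add: ez2_single_right o_def)

lemma step_words_ez2:
  "is_alternating P \<Longrightarrow> is_alternating Q \<Longrightarrow> P \<noteq> [] \<Longrightarrow> Q \<noteq> [] \<Longrightarrow>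
   map step_word (ez2 P Q) = count_words (length P - 1) (length P + length Q - 2)"
proof (induct P Q rule: ez2.induct)
  case (3 x y ys)
  have "changes (map fst (map (Pair x) (y # ys))) = replicate (length ys) False"
    by (subst changes_const[of _ x]) auto
  moreover have "changes (map snd (map (Pair x) (y # ys))) = replicate (length ys) True"
    using changes_alternating[OF 3(2)] by (simp add: o_def)
  ultimately have "step_word (map (Pair x) (y # ys)) = replicate (length ys) (False, True)"
    unfolding step_word_def by (simp add: zip_replicate)
  then show ?case by (simp add: count_words_0)
next
  case (4 x x' xs y)
  have "changes (map snd (map (\<lambda>x. (x, y)) (x # x' # xs))) = replicate (Suc (length xs)) False"
    by (subst changes_const[of _ y]) auto
  moreover have "changes (map fst (map (\<lambda>x. (x, y)) (x # x' # xs))) = replicate (Suc (length xs)) True"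
    using changes_alternating[OF 4(1)] by (simp add: o_def)
  ultimately have "step_word (map (\<lambda>x. (x, y)) (x # x' # xs)) = replicate (Suc (length xs)) (True, False)"
    unfolding step_word_def by (simp add: zip_replicate)
  then show ?case by (simp add: count_words_diag)
next
  case (5 x x' xs y y' ys)
  have alt1: "is_alternating (x' # xs)" "x \<noteq> x'"
    using is_alternating_Cons2[OF 5(3)] by auto
  have alt2: "is_alternating (y' # ys)" "y \<noteq> y'"
    using is_alternating_Cons2[OF 5(4)] by auto
  have step_fst: "map step_word (map (Cons (x, y)) (ez2 (x' # xs) (y # y' # ys))) =
      map (Cons (True, False)) (map step_word (ez2 (x' # xs) (y # y' # ys)))"
    using alt1 by (auto simp: step_word_Cons dest: ez2_hd)
  have step_snd: "map step_word (map (Cons (x, y)) (ez2 (x # x' # xs) (y' # ys))) =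
      map (Cons (False, True)) (map step_word (ez2 (x # x' # xs) (y' # ys)))"
    using alt2 by (auto simp: step_word_Cons dest: ez2_hd)
  show ?case
    apply (simp only: ez2.simps map_append step_fst step_snd)
    apply (subst 5(1)[OF alt1(1) 5(4)], simp, simp)
    apply (subst 5(2)[OF 5(3) alt2(1)], simp, simp)
    using count_words_Suc[of "length xs" "Suc (length xs + length ys)"] by simp
qed auto

lemma length_xt [simp]: "length (xt n) = Suc n"
  by (simp add: xt_def)

lemma xt_nonempty: "xt i \<noteq> []"
  by (simp add: xt_def)

lemma set_xt: "p \<in> set (xt i) \<Longrightarrow> p = [0, 1] \<or> p = [1, 0]"
  unfolding xt_alternating_list perm2_def by (auto split: if_splits)

lemma is_simp_xt: "is_simp 2 (xt i)"
  unfolding is_simp_def by (auto simp: xt_def is_perm_def)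

lemma arity_xt [simp]: "arity (xt i) = 2"
  by (simp add: arity_def xt_def upt_conv_Cons del: upt_Suc)

lemma compE_xt_xt0: "compE (xt i) [xt 0, xt 0] = [map (\<lambda>p. perm_gamma p [[0, 1], [0, 1]]) (xt i)]"
proof -
  have "ezm [xt 0, xt 0] = [[[[0, 1], [0, 1]]]]"
    by (simp add: xt_def)
  then show ?thesis
    using xt_nonempty by (simp add: compE_def ez2_single_right o_def)
qed

lemma compE_xt0_xt:
  "compE (xt 0) [xt j, xt k] = map (map kperm) (ez2 (alternating_list j) (alternating_list k))"
proof -
  have ezm_jk: "ezm [xt j, xt k] = map (map (\<lambda>(u, v). [u, v])) (ez2 (xt j) (xt k))"
  proof -
    have "ez2 (xt j) (map (\<lambda>x. [x]) (xt k)) = map (map (map_prod id (\<lambda>x. [x]))) (ez2 (xt j) (xt k))"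
      using ez2_map[of id "xt j" "\<lambda>x. [x]" "xt k"] by simp
    then show ?thesis
      using ezm_single[OF xt_nonempty] by (simp add: o_def map_prod_def split_def)
  qed
  have nonempty: "\<And>z. z \<in> set (ezm [xt j, xt k]) \<Longrightarrow> z \<noteq> []"
    unfolding ezm_jk using ez2_hd by fastforce
  have ezm_0jk: "ezm [xt 0, xt j, xt k] = map (map (\<lambda>t. [0, 1] # t)) (ezm [xt j, xt k])"
  proof -
    have "ezm [xt 0, xt j, xt k] =
        concat (map (\<lambda>z. map (map (\<lambda>(a, t). a # t)) (ez2 [[0, 1]] z)) (ezm [xt j, xt k]))"
      by (simp add: xt_def)
    also have "\<dots> = concat (map (\<lambda>z. [map (\<lambda>t. [0, 1] # t) z]) (ezm [xt j, xt k]))"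
      by (rule arg_cong[where f = concat], rule map_cong[OF refl])
        (simp add: ez2_single_left nonempty o_def)
    finally show ?thesis
      by (induct "ezm [xt j, xt k]") auto
  qed
  have gamma: "perm_gamma [0, Suc 0] [perm2 (fst x), perm2 (snd x)] = kperm x" for x
    by (cases x) (simp add: perm_gamma_def perm2_def kperm_def)
  show ?thesis
    unfolding compE_def ezm_0jk unfolding ezm_jk unfolding xt_alternating_list ez2_map
    by (simp add: o_def split_def gamma)
qed

section \<open>The simplices of \<open>H\<^sub>1(x\<^sub>n)\<close>\<close>

definition fvert :: "bool \<Rightarrow> perm" where
  "fvert b = pcomp t23 (fS (perm2 b))"

definition gvert :: "bool \<Rightarrow> perm" where
  "gvert b = gS (perm2 b)"

definition H1_row :: "nat \<Rightarrow> nat \<Rightarrow> simp" where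
  "H1_row n j = map (\<lambda>r. if r \<le> j then fvert (odd r) else gvert (odd (r - 1))) [0..<Suc (Suc n)]"

definition H1_face :: "nat \<Rightarrow> nat \<Rightarrow> simp" where
  "H1_face n m = map (\<lambda>r. if r < m then fvert (odd r) else gvert (odd r)) [0..<Suc n]"

lemma gvert_eq_kperm: "gvert b = kperm (b, b)"
  by (simp add: gvert_def gS_def perm2_def kperm_def)

lemma fvert_not: "fvert (\<not> b) = pcomp (kperm (True, True)) (fvert b)"
  by (cases b) (simp_all add: fvert_def perm2_def fS_def pcomp_def t23_def kperm_def)

lemma gvert_not: "gvert (\<not> b) = pcomp (kperm (True, True)) (gvert b)"
  by (cases b) (simp_all add: gvert_def perm2_def gS_def pcomp_def kperm_def)

lemma is_perm_fvert: "is_perm 4 (fvert b)"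
  by (cases b)
    (auto simp: fvert_def perm2_def fS_def pcomp_def t23_def is_perm_def numeral_eq_Suc lessThan_Suc)

lemma is_perm_gvert: "is_perm 4 (gvert b)"
  unfolding gvert_eq_kperm by (rule is_perm_kperm)

lemma is_simp_map_upt: "(\<And>r. is_perm 4 (F r)) \<Longrightarrow> is_simp 4 (map F [0..<Suc L])"
  unfolding is_simp_def by auto

lemma H1_xt: "H1 (xt n) = map (H1_row n) [0..<Suc n]"
proof -
  have row: "map (\<lambda>p. pcomp t23 (fS p)) (take (Suc j) (xt n)) @ map gS (drop j (xt n)) = H1_row n j"
    if "j < Suc n" for j
  proof -
    have "[0..<Suc (Suc n)] = [0..<Suc j] @ [Suc j..<Suc (Suc n)]"
      using upt_add_eq_append[of 0 "Suc j" "Suc n - j"] that by simp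
    then have "[0..<Suc (Suc n)] = [0..<Suc j] @ map Suc [j..<Suc n]"
      by (simp only: map_Suc_upt)
    then show ?thesis
      using that by (simp add: H1_row_def xt_def take_map drop_map fvert_def gvert_def perm2_def
          del: upt_Suc)
  qed
  then show ?thesis
    unfolding H1_def length_xt by (intro map_cong) auto
qed

lemma face_nth:
  "k < length s \<Longrightarrow> i < length s - 1 \<Longrightarrow> face k s ! i = (if i < k then s ! i else s ! Suc i)"
  by (auto simp: face_def nth_append min_def)

lemma length_face: "k < length s \<Longrightarrow> length (face k s) = length s - 1"
  by (simp add: face_def)

lemma face_map_upt:
  "k \<le> L \<Longrightarrow> face k (map F [0..<Suc L]) = map (\<lambda>r. F (if r < k then r else Suc r)) [0..<L]"
  by (rule nth_equalityI) (simp_all add: length_face face_nth del: upt_Suc)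

lemma degenerate_map_upt: "Suc r < L \<Longrightarrow> F r = F (Suc r) \<Longrightarrow> degenerate (map F [0..<L])"
  unfolding degenerate_def by (rule exI[of _ r]) simp

lemma is_simp_H1_row: "is_simp 4 (H1_row n j)"
  unfolding H1_row_def by (rule is_simp_map_upt) (simp add: is_perm_fvert is_perm_gvert)

lemma is_simp_face_H1_row: "k \<le> Suc n \<Longrightarrow> is_simp 4 (face k (H1_row n j))"
  unfolding H1_row_def
  by (simp add: face_map_upt del: upt_Suc) (rule is_simp_map_upt, simp add: is_perm_fvert is_perm_gvert)

lemma face_H1_row_diag: "face j (H1_row n j) = H1_face n j" if "j \<le> n"
  using that unfolding H1_row_def H1_face_def
  by (subst face_map_upt) (auto simp del: upt_Suc)

lemma face_Suc_H1_row_diag: "face (Suc j) (H1_row n j) = H1_face n (Suc j)" if "j \<le> n"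
  using that unfolding H1_row_def H1_face_def
  by (subst face_map_upt) (auto simp del: upt_Suc)

lemma degenerate_face_H1_row:
  assumes "0 < k" "k < Suc n" "k \<noteq> j" "k \<noteq> Suc j"
  shows "degenerate (face k (H1_row n j))"
  using assms unfolding H1_row_def
  by (subst face_map_upt) (auto intro!: degenerate_map_upt[of "k - 1"] simp del: upt_Suc)

lemma face_0_H1_row_Suc:
  "j < n \<Longrightarrow> face 0 (H1_row n (Suc j)) = lmul (kperm (True, True)) (face (Suc n) (H1_row n j))"
  unfolding H1_row_def lmul_def
  by (simp add: face_map_upt fvert_not[symmetric] gvert_not[symmetric] del: upt_Suc)

lemma H1_face_0: "H1_face n 0 = ksimp (False, False) (replicate n (True, True))"
proof -
  have "H1_face n 0 = map kperm (zip (alternating_list n) (alternating_list n))"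
    by (simp add: H1_face_def alternating_list_def gvert_eq_kperm zip_map_map[symmetric]
        zip_same_conv_map o_def)
  also have "\<dots> = ksimp (False, False) (replicate n (True, True))"
    by (subst map_kperm_zip) (simp_all add: changes_alternating_list zip_replicate,
        simp add: alternating_list_def upt_conv_Cons del: upt_Suc)
  finally show ?thesis .
qed

lemma H1_face_Suc: "H1_face n (Suc n) = map (\<lambda>p. pcomp t23 (fS p)) (xt n)"
  by (simp add: H1_face_def xt_alternating_list alternating_list_def fvert_def del: upt_Suc)

section \<open>The Shih homotopy on the diagonal of \<open>x\<^sub>n\<close>\<close>

lemma degen_0_Cons: "degen 0 (x # L) = x # x # L"
  by (simp add: degen_def)

lemma degen_Suc_Cons: "degen (Suc j) (x # L) = x # degen j L"
  by (simp add: degen_def)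

lemma hd_degen: "L \<noteq> [] \<Longrightarrow> hd (degen j L) = hd L"
  by (cases L) (simp_all add: degen_def)

lemma degen_nonempty: "L \<noteq> [] \<Longrightarrow> degen j L \<noteq> []"
  by (cases L) (simp_all add: degen_def)

lemma length_degen: "j < length L \<Longrightarrow> length (degen j L) = Suc (length L)"
  by (simp add: degen_def)

lemma degen_map: "degen j (map f L) = map f (degen j L)"
  by (simp add: degen_def take_map drop_map)

lemma degens_Nil [simp]: "degens [] L = L"
  by (simp add: degens_def)

lemma degens_snoc: "degens (js @ [j]) L = degen j (degens js L)"
  by (simp add: degens_def)

lemma hd_degens: "L \<noteq> [] \<Longrightarrow> hd (degens js L) = hd L \<and> degens js L \<noteq> []"
  by (induct js rule: rev_induct) (simp_all add: degens_snoc hd_degen degen_nonempty)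

lemma degens_map: "degens js (map f L) = map f (degens js L)"
  by (induct js rule: rev_induct) (simp_all add: degens_snoc degen_map)

lemma changes_degen:
  "j < length L \<Longrightarrow> changes (degen j L) = take j (changes L) @ False # drop j (changes L)"
proof (induct L arbitrary: j)
  case Nil
  then show ?case by simp
next
  case (Cons x L)
  show ?case
  proof (cases j)
    case 0
    then show ?thesis by (simp add: degen_0_Cons)
  next
    case (Suc j')
    then have "j' < length L" "L \<noteq> []"
      using Cons.prems by auto
    then show ?thesis
      unfolding Suc degen_Suc_Cons
      using Cons.hyps by (simp add: changes_Cons degen_nonempty hd_degen)
  qed
qed

lemma insert_False_non_member_list:
  assumes "\<forall>x\<in>set js. x < j" "j \<le> m"
  shows "take j (map (\<lambda>r. r \<notin> set js) [0..<m]) @ False # drop j (map (\<lambda>r. r \<notin> set js) [0..<m])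
    = map (\<lambda>r. r \<notin> set (js @ [j])) [0..<Suc m]"
proof (rule nth_equalityI)
  fix r
  assume "r < length (take j (map (\<lambda>r. r \<notin> set js) [0..<m]) @ False
      # drop j (map (\<lambda>r. r \<notin> set js) [0..<m]))"
  then have r: "r < Suc m"
    using assms by simp
  consider "r < j" | "r = j" | "j < r"
    by linarith
  then show "(take j (map (\<lambda>r. r \<notin> set js) [0..<m]) @ False
      # drop j (map (\<lambda>r. r \<notin> set js) [0..<m])) ! r = map (\<lambda>r. r \<notin> set (js @ [j])) [0..<Suc m] ! r"
    using assms r by cases (auto simp: nth_append nth_Cons' min_def simp del: upt_Suc)
qed (use assms in simp)

lemma changes_degens:
  assumes "sorted_wrt (<) js" "\<forall>j\<in>set js. j < t + length js" "L \<noteq> []"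
    and L: "changes L = Pre @ replicate t True"
  shows "changes (degens (map (\<lambda>k. k + length Pre) js) L) =
      Pre @ map (\<lambda>r. r \<notin> set js) [0..<t + length js]
    \<and> length (degens (map (\<lambda>k. k + length Pre) js) L) = length L + length js"
  using assms(1,2)
proof (induct js rule: rev_induct)
  case Nil
  then show ?case using L by (simp add: map_replicate_const)
next
  case (snoc j js)
  let ?X = "degens (map (\<lambda>k. k + length Pre) js) L"
  have below: "\<forall>x\<in>set js. x < j"
    using snoc.prems(1) by (simp add: sorted_wrt_append)
  have j: "j < Suc (t + length js)"
    using snoc.prems(2) by simp
  have IH: "changes ?X = Pre @ map (\<lambda>r. r \<notin> set js) [0..<t + length js]
      \<and> length ?X = length L + length js"
    using snoc.hyps snoc.prems below j by (fastforce simp: sorted_wrt_append)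
  have "length L = Suc (length Pre + t)"
    using assms(3) L length_changes[of L] by simp
  then have jX: "j + length Pre < length ?X"
    using IH j by simp
  have "changes (degen (j + length Pre) ?X) =
      Pre @ map (\<lambda>r. r \<notin> set (js @ [j])) [0..<t + length (js @ [j])]"
    using IH jX below j by (simp add: changes_degen insert_False_non_member_list)
  then show ?case
    using IH length_degen[OF jX] by (simp add: degens_snoc)
qed

text \<open>The two coordinates of the term of \<open>shi (x\<^sub>n, x\<^sub>n)\<close> with indices \<open>q\<close>, \<open>p\<close> and shuffle \<open>al\<close>,
  computed on the alternating list whose image under \<open>perm2\<close> is \<open>x\<^sub>n\<close>.\<close>

definition shih_fst :: "nat \<Rightarrow> nat \<Rightarrow> nat \<Rightarrow> nat list \<Rightarrow> bool list" where
  "shih_fst n q p al = degens (map (\<lambda>k. k + (n - p - q)) (filter (\<lambda>k. k \<notin> set al) [0..<p + q + 1]))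
      (degen (n - p - q - 1) (take (n - q + 1) (alternating_list n)))"

definition shih_snd :: "nat \<Rightarrow> nat \<Rightarrow> nat \<Rightarrow> nat list \<Rightarrow> bool list" where
  "shih_snd n q p al = degens (map (\<lambda>k. k + (n - p - q)) al)
      (take (n - p - q) (alternating_list n) @ drop (n - q) (alternating_list n))"

lemma length_filter_not_in_subseq:
  assumes "al \<in> set (subseqs [0..<N])"
  shows "length (filter (\<lambda>k. k \<notin> set al) [0..<N]) = N - length al"
proof -
  have "length (filter (\<lambda>k. k \<in> set al) [0..<N]) = length al"
    using count_12_indicator_word[OF assms] by (simp add: count_12_def indicator_word_def filter_map o_def)
  then show ?thesis
    using sum_length_filter_compl[of "\<lambda>k. k \<in> set al" "[0..<N]"] by simp
qed

context
  fixes n q p :: nat and al :: "nat list"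
  assumes q: "q < n" and p: "p < n - q"
    and al: "al \<in> set (subseqs [0..<p + q + 1])" and length_al: "length al = Suc p"
begin

lemma changes_shih_fst:
  "changes (shih_fst n q p al) =
     replicate (n - (p + q + 1)) True @ False # map (\<lambda>r. r \<in> set al) [0..<p + q + 1]"
  "length (shih_fst n q p al) = Suc (Suc n)"
  "hd (shih_fst n q p al) = False"
proof -
  define be where "be = filter (\<lambda>k. k \<notin> set al) [0..<p + q + 1]"
  define L where "L = degen (n - p - q - 1) (take (n - q + 1) (alternating_list n))"
  define Pre where "Pre = replicate (n - p - q - 1) True @ [False]"
  have take: "take (n - q + 1) (alternating_list n) = alternating_list (n - q)"
    using take_alternating_list[of "n - q" n] by simp
  have L_nonempty: "L \<noteq> []"
    unfolding L_def take by (simp add: degen_nonempty)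
  have length_L: "length L = Suc (Suc (n - q))"
    unfolding L_def take using p by (simp add: length_degen)
  have "changes L = take (n - p - q - 1) (replicate (n - q) True) @ False
      # drop (n - p - q - 1) (replicate (n - q) True)"
    unfolding L_def take using p by (simp add: changes_degen changes_alternating_list)
  also have "\<dots> = Pre @ replicate (Suc p) True"
    unfolding Pre_def using p by (simp add: min_def Suc_diff_le)
  finally have changes_L: "changes L = Pre @ replicate (Suc p) True" .
  have length_Pre: "length Pre = n - p - q"
    unfolding Pre_def using p by simp
  have length_be: "length be = q"
    unfolding be_def using length_filter_not_in_subseq[OF al] length_al by simp
  have "shih_fst n q p al = degens (map (\<lambda>k. k + length Pre) be) L"
    unfolding shih_fst_def L_def be_def length_Pre ..
  moreover have "changes (degens (map (\<lambda>k. k + length Pre) be) L) =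
      Pre @ map (\<lambda>r. r \<notin> set be) [0..<Suc p + length be]
    \<and> length (degens (map (\<lambda>k. k + length Pre) be) L) = length L + length be"
  proof (rule changes_degens[OF _ _ L_nonempty changes_L])
    show "sorted_wrt (<) be"
      by (simp add: be_def sorted_wrt_filter del: upt_Suc)
    show "\<forall>j\<in>set be. j < Suc p + length be"
      unfolding length_be by (auto simp: be_def)
  qed
  moreover have "hd L = False"
    unfolding L_def take by (simp add: hd_degen alternating_list_def upt_conv_Cons del: upt_Suc)
  ultimately show
    "changes (shih_fst n q p al) =
       replicate (n - (p + q + 1)) True @ False # map (\<lambda>r. r \<in> set al) [0..<p + q + 1]"
    "length (shih_fst n q p al) = Suc (Suc n)"
    "hd (shih_fst n q p al) = False"
    using hd_degens[OF L_nonempty] length_L length_be q p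
    by (auto simp: Pre_def be_def Suc_diff_Suc add.commute simp del: upt_Suc intro!: map_cong)
qed

lemma changes_shih_snd:
  "changes (shih_snd n q p al) =
     replicate (n - (p + q + 1)) True @ even p # map (\<lambda>r. r \<notin> set al) [0..<p + q + 1]"
  "length (shih_snd n q p al) = Suc (Suc n)"
  "hd (shih_snd n q p al) = False"
proof -
  define L where "L = take (n - p - q) (alternating_list n) @ drop (n - q) (alternating_list n)"
  define Pre where "Pre = replicate (n - p - q - 1) True @ [even p]"
  have "n - p - q = Suc (n - p - q - 1)"
    using p by simp
  then have take: "take (n - p - q) (alternating_list n) = alternating_list (n - p - q - 1)"
    using take_alternating_list[of "n - p - q - 1" n] by simp
  have drop: "drop (n - q) (alternating_list n) = map odd [n - q..<n - q + Suc q]"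
    using q by (simp add: alternating_list_def drop_map del: upt_Suc)
  have L_nonempty: "L \<noteq> []"
    unfolding L_def take by simp
  have length_L: "length L = n - p - q + Suc q"
    unfolding L_def take drop using p by simp
  have last: "last (alternating_list (n - p - q - 1)) = odd (n - p - q - 1)"
    by (simp add: alternating_list_def last_map del: upt_Suc)
  have hd: "hd (map odd [n - q..<n - q + Suc q]) = odd (n - q)"
    by (simp add: upt_conv_Cons del: upt_Suc)
  have "n - q = (n - p - q - 1) + Suc p"
    using p by simp
  then have parity: "(odd (n - p - q - 1) \<noteq> odd (n - q)) = even p"
    by auto
  have "changes L = changes (alternating_list (n - p - q - 1))
      @ (last (alternating_list (n - p - q - 1)) \<noteq> hd (map odd [n - q..<n - q + Suc q]))
      # changes (map odd [n - q..<n - q + Suc q])"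
    unfolding L_def take drop by (rule changes_append) (simp_all del: upt_Suc)
  also have "\<dots> = Pre @ replicate q True"
    unfolding last hd parity Pre_def changes_alternating_list changes_odd_upt by simp
  finally have changes_L: "changes L = Pre @ replicate q True" .
  have length_Pre: "length Pre = n - p - q"
    unfolding Pre_def using p by simp
  have "shih_snd n q p al = degens (map (\<lambda>k. k + length Pre) al) L"
    unfolding shih_snd_def L_def length_Pre ..
  moreover have "changes (degens (map (\<lambda>k. k + length Pre) al) L) =
      Pre @ map (\<lambda>r. r \<notin> set al) [0..<q + length al]
    \<and> length (degens (map (\<lambda>k. k + length Pre) al) L) = length L + length al"
    using subseqs_set[OF al] length_al
    by (intro changes_degens[OF _ _ L_nonempty changes_L] sorted_wrt_subseqs[OF al])
      (auto simp del: upt_Suc)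
  moreover have "hd L = False"
    unfolding L_def take by (simp add: alternating_list_def upt_conv_Cons del: upt_Suc)
  ultimately show
    "changes (shih_snd n q p al) =
       replicate (n - (p + q + 1)) True @ even p # map (\<lambda>r. r \<notin> set al) [0..<p + q + 1]"
    "length (shih_snd n q p al) = Suc (Suc n)"
    "hd (shih_snd n q p al) = False"
    using hd_degens[OF L_nonempty] length_L length_al q p
    by (auto simp: Pre_def add.commute Suc_diff_Suc simp del: upt_Suc)
qed

lemma H2_entry_ksimp:
  "map kperm (zip (shih_fst n q p al) (shih_snd n q p al)) =
     ksimp (False, False) (replicate (n - (p + q + 1)) (True, True) @ (False, even p)
       # indicator_word al (p + q + 1))"
  using map_kperm_zip[of "shih_fst n q p al" "shih_snd n q p al"]
  by (simp add: changes_shih_fst changes_shih_snd zip_replicate indicator_word_def zip_map_map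
      zip_same_conv_map o_def del: upt_Suc flip: length_greater_0_conv)

end

lemma shi_map: "shi (map f a, map f b) = map (\<lambda>(u, v). (map f u, map f v)) (shi (a, b))"
proof -
  have "degens js (map f X @ map f Y) = map f (degens js (X @ Y))" for js X Y
    by (simp add: degens_map[symmetric])
  then show ?thesis
    by (simp add: shi_def Let_def map_concat take_map drop_map degens_map degen_map o_def del: upt_Suc)
qed

lemma zip_replicate_zip_map:
  "zip (replicate (length u) c) (zip (map f u) (map g v)) = map (\<lambda>(x, y). (c, (f x, g y))) (zip u v)"
proof (induct u arbitrary: v)
  case Nil
  then show ?case by simp
next
  case (Cons x u)
  then show ?case by (cases v) auto
qed

lemma H2_xt:
  "H2 (xt n) = concat (map (\<lambda>q. concat (map (\<lambda>p.
      map (\<lambda>al. map kperm (zip (shih_fst n q p al) (shih_snd n q p al)))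
        (filter (\<lambda>al. length al = p + 1) (subseqs [0..<p + q + 1]))) [0..<n - q])) [0..<n])"
proof -
  have gamma: "perm_gamma [0, Suc 0] [perm2 x, perm2 y] = kperm (x, y)" for x y
    by (simp add: perm_gamma_def perm2_def kperm_def)
  have "H2 (xt n) = map (\<lambda>(u, v). map kperm (zip u v)) (shi (alternating_list n, alternating_list n))"
    unfolding H2_def xt_alternating_list shi_map
    by (simp add: zip_replicate_zip_map o_def split_def gamma cong: map_cong)
  then show ?thesis
    by (simp add: shi_def Let_def shih_fst_def shih_snd_def map_concat o_def)
qed

lemma is_simp_H2_xt: "s \<in> set (H2 (xt n)) \<Longrightarrow> is_simp 4 s"
  unfolding H2_xt using H2_entry_ksimp is_simp_ksimp by (auto simp del: upt_Suc)

lemma is_simp_H1_xt: "s \<in> set (H1 (xt n)) \<Longrightarrow> is_simp 4 s"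
  unfolding H1_xt using is_simp_H1_row by auto

lemma sum_list_map_concat: "sum_list (map F (concat (map G xs))) = (\<Sum>x\<leftarrow>xs. sum_list (map F (G x)))"
  by (induct xs) simp_all

lemma sum_list_map_upt: "sum_list (map f [0..<n]) = (\<Sum>k<n. f k)"
  by (simp add: sum_set_upt_conv_sum_list_nat[symmetric] atLeast0LessThan)

section \<open>Evaluation on \<open>\<alpha> \<otimes> \<alpha> \<otimes> \<beta> \<otimes> \<beta>\<close>\<close>

locale E_alg =
  fixes d :: "'a::ab_group_add \<Rightarrow> 'a" and act :: "simp \<Rightarrow> 'a list \<Rightarrow> 'a" and \<alpha> \<beta> :: 'a
  assumes E_algebra: "E_algebra d act"
begin

lemma char2: "(x::'a) + x = 0"
  using E_algebra[unfolded E_algebra_def, THEN conjunct1] by blast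

lemma char2_cancel: "(x::'a) + (x + y) = y"
  using add_self_cancel_left char2 by blast

lemma char2_diff: "(x::'a) - y = x + y"
  by (metis add_eq_0_iff char2 diff_conv_add_uminus)

lemma d_add: "d (x + y) = d x + d y"
  using E_algebra[unfolded E_algebra_def, THEN conjunct2, THEN conjunct1] by blast

lemma d_zero: "d 0 = 0"
  using d_add[of 0 0] by simp

lemma act_degenerate: "is_simp r s \<Longrightarrow> degenerate s \<Longrightarrow> length xs = r \<Longrightarrow> act s xs = 0"
  using E_algebra[unfolded E_algebra_def, THEN conjunct2, THEN conjunct2, THEN conjunct2,
      THEN conjunct2, THEN conjunct1]
  by blast

lemma act_bd: "is_simp r s \<Longrightarrow> length xs = r \<Longrightarrow> homd d (act s) xs = actC act (bd s) xs"
  using E_algebra[unfolded E_algebra_def, THEN conjunct2, THEN conjunct2, THEN conjunct2,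
      THEN conjunct2, THEN conjunct2, THEN conjunct1]
  by blast

lemma act_lmul:
  "is_perm r g \<Longrightarrow> is_simp r s \<Longrightarrow> length xs = r \<Longrightarrow>
   act (lmul g s) xs = act s (map (\<lambda>k. xs ! (g ! k)) [0..<r])"
  using E_algebra[unfolded E_algebra_def, THEN conjunct2, THEN conjunct2, THEN conjunct2,
      THEN conjunct2, THEN conjunct2, THEN conjunct2, THEN conjunct1]
  by blast

lemma act_compE:
  "ys \<noteq> [] \<Longrightarrow> is_simp (length ys) x \<Longrightarrow> (\<forall>y\<in>set ys. 1 \<le> arity y \<and> is_simp (arity y) y) \<Longrightarrow>
   length xs = sum_list (map arity ys) \<Longrightarrow>
   actC act (compE x ys) xs =
     act x (map (\<lambda>k. act (ys ! k) (take (arity (ys ! k)) (drop (sum_list (map arity (take k ys))) xs)))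
       [0..<length ys])"
  using E_algebra[unfolded E_algebra_def, THEN conjunct2, THEN conjunct2, THEN conjunct2,
      THEN conjunct2, THEN conjunct2, THEN conjunct2, THEN conjunct2, THEN conjunct1]
  by blast

definition val :: "simp \<Rightarrow> 'a" where
  "val s = act s [\<alpha>, \<alpha>, \<beta>, \<beta>]"

definition bd_val :: "simp \<Rightarrow> 'a" where
  "bd_val s = sum_list (map val (bd s))"

definition wval :: "word \<Rightarrow> 'a" where
  "wval w = val (ksimp (False, False) w)"

lemma val_degenerate: "is_simp 4 s \<Longrightarrow> degenerate s \<Longrightarrow> val s = 0"
  unfolding val_def using act_degenerate[of 4 s "[\<alpha>, \<alpha>, \<beta>, \<beta>]"] by simp

lemma bd_val_eq_homd: "is_simp 4 s \<Longrightarrow> bd_val s = homd d (act s) [\<alpha>, \<alpha>, \<beta>, \<beta>]"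
  by (subst act_bd[of 4 s]) (simp_all add: bd_val_def actC_def val_def[abs_def])

lemma bd_val_degenerate: "is_simp 4 s \<Longrightarrow> degenerate s \<Longrightarrow> bd_val s = 0"
  by (simp add: bd_val_eq_homd homd_def act_degenerate d_zero)

text \<open>The Klein four-group fixes \<open>\<alpha> \<otimes> \<alpha> \<otimes> \<beta> \<otimes> \<beta>\<close>.\<close>

lemma val_lmul_kperm: "is_simp 4 s \<Longrightarrow> val (lmul (kperm g) s) = val s"
proof -
  assume s: "is_simp 4 s"
  have "map (\<lambda>k. [\<alpha>, \<alpha>, \<beta>, \<beta>] ! (kperm g ! k)) [0..<4] = [\<alpha>, \<alpha>, \<beta>, \<beta>]"
    by (cases g) (simp add: kperm_def upt_rec)
  then show ?thesis
    unfolding val_def by (subst act_lmul[OF is_perm_kperm s]) simp_all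
qed

lemma val_ksimp: "val (ksimp g w) = wval w"
  unfolding wval_def by (subst ksimp_eq_lmul, rule val_lmul_kperm, rule is_simp_ksimp)

lemma val_map_kperm: "\<pi> \<noteq> [] \<Longrightarrow> val (map kperm \<pi>) = wval (step_word \<pi>)"
  by (simp add: map_kperm_eq_ksimp val_ksimp)

lemma null_on_degenerate_wval: "null_on_degenerate wval"
  unfolding null_on_degenerate_def wval_def
  by (auto intro!: val_degenerate is_simp_ksimp degenerate_ksimp)

lemma bd_val_ksimp: "bd_val (ksimp g w) = face_sum wval w"
proof (cases "w = []")
  case True
  then show ?thesis by (simp add: bd_val_def face_sum_def bd_def)
next
  case False
  then show ?thesis
    unfolding bd_val_def face_sum_def
    by (subst word_faces_nonempty[OF False]) (simp add: bd_ksimp wsum_def val_ksimp o_def)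
qed

lemma homd_actC:
  "(\<And>s. s \<in> set C \<Longrightarrow> is_simp 4 s) \<Longrightarrow>
   homd d (actC act C) [\<alpha>, \<alpha>, \<beta>, \<beta>] = sum_list (map bd_val C)"
proof (induct C)
  case Nil
  then show ?case by (simp add: homd_def actC_def d_zero)
next
  case (Cons s C)
  have "actC act (s # C) = (\<lambda>xs. act s xs + actC act C xs)"
    by (simp add: actC_def fun_eq_iff)
  then show ?case
    using Cons by (simp add: homd_def d_add sum.distrib bd_val_eq_homd ac_simps)
qed

lemma cup_cup0_eq_val:
  "cup act i (cup act 0 \<alpha> \<beta>) (cup act 0 \<alpha> \<beta>) = val (map (\<lambda>p. pcomp t23 (fS p)) (xt i))"
proof -
  let ?s = "map (\<lambda>p. perm_gamma p [[0, 1], [0, 1]]) (xt i)"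
  have "actC act (compE (xt i) [xt 0, xt 0]) [\<alpha>, \<beta>, \<alpha>, \<beta>] =
      act (xt i) [act (xt 0) [\<alpha>, \<beta>], act (xt 0) [\<alpha>, \<beta>]]"
    by (subst act_compE) (simp_all add: is_simp_xt is_simp_xt[unfolded numeral_2_eq_2] upt_rec)
  then have cup: "cup act i (cup act 0 \<alpha> \<beta>) (cup act 0 \<alpha> \<beta>) = act ?s [\<alpha>, \<beta>, \<alpha>, \<beta>]"
    by (simp add: cup_def compE_xt_xt0 actC_def)
  have s: "is_simp 4 ?s"
    unfolding is_simp_def by (auto simp: xt_def perm_gamma_def is_perm_def)
  have t23: "is_perm 4 t23"
    unfolding t23_def is_perm_def by (auto simp: numeral_eq_Suc lessThan_Suc)
  have "map (\<lambda>p. pcomp t23 (fS p)) (xt i) = lmul t23 ?s"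
    unfolding lmul_def by (auto dest!: set_xt simp: fS_def perm_gamma_def pcomp_def t23_def)
  moreover have "val (lmul t23 ?s) = act ?s [\<alpha>, \<beta>, \<alpha>, \<beta>]"
    unfolding val_def by (subst act_lmul[OF t23 s]) (simp_all add: t23_def upt_rec)
  ultimately show ?thesis
    using cup by simp
qed

lemma cup0_cup_eq_wsum:
  "cup act 0 (cup act j \<alpha> \<alpha>) (cup act k \<beta> \<beta>) = wsum wval (count_words j (j + k))"
proof -
  have "actC act (compE (xt 0) [xt j, xt k]) [\<alpha>, \<alpha>, \<beta>, \<beta>] =
      act (xt 0) [act (xt j) [\<alpha>, \<alpha>], act (xt k) [\<beta>, \<beta>]]"
    by (subst act_compE) (simp_all add: is_simp_xt is_simp_xt[unfolded numeral_2_eq_2] upt_rec)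
  then have "cup act 0 (cup act j \<alpha> \<alpha>) (cup act k \<beta> \<beta>) =
      sum_list (map val (map (map kperm) (ez2 (alternating_list j) (alternating_list k))))"
    by (simp add: cup_def compE_xt0_xt actC_def val_def[abs_def])
  also have "\<dots> = wsum wval (map step_word (ez2 (alternating_list j) (alternating_list k)))"
    unfolding wsum_def map_map o_def
    by (rule arg_cong[where f = sum_list], rule map_cong[OF refl], rule val_map_kperm)
      (blast dest: ez2_hd)
  also have "\<dots> = wsum wval (count_words j (j + k))"
    by (subst step_words_ez2) (simp_all add: alternating_list_is_alternating)
  finally show ?thesis .
qed

lemma cartan_sum_eq_wsum:
  "(\<Sum>j\<le>i. cup act 0 (cup act j \<alpha> \<alpha>) (cup act (i - j) \<beta> \<beta>)) = wsum wval (shuffle_words i)"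
proof -
  have "(\<Sum>j\<le>i. cup act 0 (cup act j \<alpha> \<alpha>) (cup act (i - j) \<beta> \<beta>)) = (\<Sum>j\<le>i. wsum wval (count_words j i))"
    by (rule sum.cong) (simp_all add: cup0_cup_eq_wsum)
  then show ?thesis
    by (simp add: sum_count_words)
qed

lemma bd_val_H1_row:
  assumes "j \<le> n"
  shows "bd_val (H1_row n j) = val (H1_face n j) + val (H1_face n (Suc j))
    + (if 0 < j then val (face 0 (H1_row n j)) else 0)
    + (if j < n then val (face (Suc n) (H1_row n j)) else 0)"
proof -
  define T where "T k = val (face k (H1_row n j))" for k
  have T: "T k = (if k = j then val (H1_face n j) else 0) + (if k = Suc j then val (H1_face n (Suc j)) else 0)
      + (if k = 0 \<and> 0 < j then T 0 else 0) + (if k = Suc n \<and> j < n then T (Suc n) else 0)"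
    if k: "k < Suc (Suc n)" for k
  proof -
    consider "k = j" | "k = Suc j" | "k = 0 \<and> 0 < j" | "k = Suc n \<and> j < n"
      | "0 < k \<and> k < Suc n \<and> k \<noteq> j \<and> k \<noteq> Suc j"
      using assms k by linarith
    then show ?thesis
    proof cases
      case 5
      then have "T k = 0"
        unfolding T_def using k
        by (intro val_degenerate is_simp_face_H1_row degenerate_face_H1_row) auto
      then show ?thesis using 5 by auto
    qed (use assms in \<open>auto simp: T_def face_H1_row_diag face_Suc_H1_row_diag\<close>)
  qed
  have "bd_val (H1_row n j) = (\<Sum>k<Suc (Suc n). T k)"
    by (simp add: bd_val_def bd_def H1_row_def T_def sum_list_map_upt o_def del: upt_Suc)
  also have "\<dots> = (\<Sum>k<Suc (Suc n). (if k = j then val (H1_face n j) else 0)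
      + (if k = Suc j then val (H1_face n (Suc j)) else 0)
      + (if k = 0 \<and> 0 < j then T 0 else 0) + (if k = Suc n \<and> j < n then T (Suc n) else 0))"
    by (rule sum.cong[OF refl], rule T) simp
  also have "\<dots> = val (H1_face n j) + val (H1_face n (Suc j))
      + (if 0 < j then T 0 else 0) + (if j < n then T (Suc n) else 0)"
    using assms by (simp add: sum.distrib)
  finally show ?thesis
    unfolding T_def .
qed

lemma bd_val_H1_xt:
  "sum_list (map bd_val (H1 (xt n))) =
     val (map (\<lambda>p. pcomp t23 (fS p)) (xt n)) + wval (replicate n (True, True))"
proof -
  define F where "F m = val (H1_face n m)" for m
  define T where "T j k = val (face k (H1_row n j))" for j k
  have outer_0: "(\<Sum>j<Suc n. if 0 < j then T j 0 else 0) = (\<Sum>j<n. T (Suc j) 0)"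
    by (subst sum.lessThan_Suc_shift) simp
  have outer_last: "(\<Sum>j<Suc n. if j < n then T j (Suc n) else 0) = (\<Sum>j<n. T j (Suc n))"
    by (simp add: sum.lessThan_Suc)
  have "sum_list (map bd_val (H1 (xt n))) = (\<Sum>j<Suc n. bd_val (H1_row n j))"
    by (simp add: H1_xt sum_list_map_upt del: upt_Suc)
  also have "\<dots> = (\<Sum>j<Suc n. (F (Suc j) - F j) + ((if 0 < j then T j 0 else 0)
      + (if j < n then T j (Suc n) else 0)))"
    by (rule sum.cong) (simp_all add: bd_val_H1_row F_def T_def char2_diff ac_simps)
  also have "\<dots> = (\<Sum>j<Suc n. F (Suc j) - F j) + ((\<Sum>j<n. T (Suc j) 0) + (\<Sum>j<n. T j (Suc n)))"
    by (simp only: sum.distrib outer_0 outer_last)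
  also have "(\<Sum>j<n. T (Suc j) 0) = (\<Sum>j<n. T j (Suc n))"
    \<comment> \<open>the outer faces of consecutive simplices differ by a left translation by \<open>(12)(34)\<close>\<close>
    by (rule sum.cong)
      (simp_all add: T_def face_0_H1_row_Suc val_lmul_kperm is_simp_face_H1_row)
  finally have "sum_list (map bd_val (H1 (xt n))) = F (Suc n) - F 0"
    by (simp only: sum_lessThan_telescope char2 add_0_right)
  then show ?thesis
    by (simp add: F_def H1_face_0 H1_face_Suc val_ksimp char2_diff)
qed

lemma bd_val_H2_entry:
  assumes "q < n" "p < n - q" "al \<in> set (subseqs [0..<p + q + 1])" "length al = Suc p"
  shows "bd_val (map kperm (zip (shih_fst n q p al) (shih_snd n q p al))) =
    (if even p then face_sum wval (replicate (n - (p + q + 1)) (True, True) @ (False, True)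
       # indicator_word al (p + q + 1)) else 0)"
proof (cases "even p")
  case True
  then show ?thesis by (simp add: H2_entry_ksimp[OF assms] bd_val_ksimp)
next
  case False
  then show ?thesis
    by (simp add: H2_entry_ksimp[OF assms] bd_val_degenerate is_simp_ksimp degenerate_ksimp)
qed

lemma bd_val_H2_xt:
  "sum_list (map bd_val (H2 (xt n))) = wval (replicate n (True, True)) + wsum wval (shuffle_words n)"
proof -
  define G where "G N w = face_sum wval (replicate (n - N) (True, True) @ (False, True) # w)" for N w
  define f where "f N p = (if even p then wsum (G N) (count_words (Suc p) N) else 0)" for N p
  have block: "sum_list (map (\<lambda>al. bd_val (map kperm (zip (shih_fst n q p al) (shih_snd n q p al))))
      (filter (\<lambda>al. length al = p + 1) (subseqs [0..<p + q + 1]))) = f (p + q + 1) p"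
    if "q < n" "p < n - q" for q p
  proof -
    have "sum_list (map (\<lambda>al. bd_val (map kperm (zip (shih_fst n q p al) (shih_snd n q p al))))
        (filter (\<lambda>al. length al = p + 1) (subseqs [0..<p + q + 1]))) =
      sum_list (map (\<lambda>al. if even p then G (p + q + 1) (indicator_word al (p + q + 1)) else 0)
        (filter (\<lambda>al. length al = p + 1) (subseqs [0..<p + q + 1])))"
      unfolding G_def using that
      by (intro arg_cong[where f = sum_list] map_cong refl) (simp add: bd_val_H2_entry)
    also have "\<dots> = f (p + q + 1) p"
      by (simp add: f_def wsum_def o_def flip: count_words_subseqs)
    finally show ?thesis .
  qed
  have "sum_list (map bd_val (H2 (xt n))) = (\<Sum>q<n. \<Sum>p<n - q. f (p + q + 1) p)"
    unfolding H2_xt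
    by (simp only: map_map o_def sum_list_map_concat sum_list_map_upt)
      (intro sum.cong refl, rule block, auto)
  also have "\<dots> = (\<Sum>N\<in>{1..n}. \<Sum>p<N. f N p)"
    by (rule sum_triangle_reindex)
  also have "\<dots> = (\<Sum>N\<in>{1..n}. wsum (G N) (odd_words N))"
    unfolding f_def by (intro sum.cong refl sum_even_count_words)
  also have "\<dots> = wsum (face_sum wval) (shih_words n)"
    unfolding G_def by (rule sum_shih_words)
  also have "\<dots> = wval (replicate n (True, True)) + wsum wval (shuffle_words n)"
    by (rule wsum_face_sum_shih_words[OF char2 null_on_degenerate_wval])
  finally show ?thesis .
qed

end

theorem mainTheorem3:
  fixes d :: "'a::ab_group_add \<Rightarrow> 'a" and act :: "simp \<Rightarrow> 'a list \<Rightarrow> 'a"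
    and i :: nat and \<alpha> \<beta> :: 'a
  assumes "E_algebra d act"
  shows "homd d (zeta_op act i) [\<alpha>, \<alpha>, \<beta>, \<beta>] =
           cup act i (cup act 0 \<alpha> \<beta>) (cup act 0 \<alpha> \<beta>)
           + (\<Sum>j\<le>i. cup act 0 (cup act j \<alpha> \<alpha>) (cup act (i - j) \<beta> \<beta>))"
proof -
  interpret E_alg d act \<alpha> \<beta>
    using assms by (rule E_alg.intro)
  have "homd d (zeta_op act i) [\<alpha>, \<alpha>, \<beta>, \<beta>] = sum_list (map bd_val (H1 (xt i) @ H2 (xt i)))"
    unfolding zeta_op_def by (rule homd_actC) (auto dest: is_simp_H1_xt is_simp_H2_xt)
  also have "\<dots> = val (map (\<lambda>p. pcomp t23 (fS p)) (xt i)) + wsum wval (shuffle_words i)"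
    by (simp add: bd_val_H1_xt bd_val_H2_xt ac_simps char2_cancel)
  finally show ?thesis
    by (simp add: cup_cup0_eq_val cartan_sum_eq_wsum)
qed

end
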